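(* Every expanding automaton semigroup is residually finite.
   Context: An expanding automaton is a quadruple $\mathcal{A}=(Q,\Sigma,t,o)$ with $Q$ a finite set of states, $\Sigma$ a finite alphabet, $t:Q\times\Sigma\to Q$ and $o:Q\times\Sigma\to\Sigma^+$. Each state $q$ induces $q:\Sigma^*\to\Sigma^*$ by $q(\emptyset)=\emptyset$ and $q(\sigma w)=o(q,\sigma)\,q'(w)$ with $q'=t(q,\sigma)$. An expanding automaton semigroup is (a semigroup isomorphic to) the semigroup of maps $\Sigma^*\to\Sigma^*$ generated under composition by the states of an expanding automaton. *)

theory Defs
  imports Main
begin

fun state_map :: "('q \<Rightarrow> 'a \<Rightarrow> 'q) \<Rightarrow> ('q \<Rightarrow> 'a \<Rightarrow> 'a list) \<Rightarrow> 'q \<Rightarrow> 'a list \<Rightarrow> 'a list" where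
  "state_map tr out q [] = []"
| "state_map tr out q (\<sigma> # w) = out q \<sigma> @ state_map tr out (tr q \<sigma>) w"

inductive_set gen_semigroup :: "('b \<Rightarrow> 'b) set \<Rightarrow> ('b \<Rightarrow> 'b) set" for G where
  gen: "f \<in> G \<Longrightarrow> f \<in> gen_semigroup G"
| comp: "f \<in> gen_semigroup G \<Longrightarrow> g \<in> gen_semigroup G \<Longrightarrow> f \<circ> g \<in> gen_semigroup G"

definition automaton_semigroup :: "('q \<Rightarrow> 'a \<Rightarrow> 'q) \<Rightarrow> ('q \<Rightarrow> 'a \<Rightarrow> 'a list) \<Rightarrow> ('a list \<Rightarrow> 'a list) set" where
  "automaton_semigroup tr out = gen_semigroup (range (state_map tr out))"

text \<open>A semigroup (S, mult) is residually finite if any two distinct elements are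
  separated by a congruence of finite index (equivalently, by a homomorphism
  onto a finite semigroup).\<close>
definition residually_finite :: "'b set \<Rightarrow> ('b \<Rightarrow> 'b \<Rightarrow> 'b) \<Rightarrow> bool" where
  "residually_finite S mult \<longleftrightarrow>
     (\<forall>x\<in>S. \<forall>y\<in>S. x \<noteq> y \<longrightarrow>
        (\<exists>R. equiv S R
             \<and> (\<forall>a b c. (a, b) \<in> R \<and> c \<in> S \<longrightarrow>
                   (mult a c, mult b c) \<in> R \<and> (mult c a, mult c b) \<in> R)
             \<and> finite (S // R)
             \<and> (x, y) \<notin> R))"

end

theory Submission
  imports Defs "HOL-Library.FuncSet"
begin

(* Call a map h on words causal if the first n letters of h u depend
   only on the first n letters of u.  Since an expanding automaton writes at least
   one letter per letter read, every state map is causal, and causal maps are closed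
   under composition, so the whole automaton semigroup consists of causal maps.
   For fixed n, the truncation  trunc n f = (u \<mapsto> first n letters of f (first n
   letters of u))  is multiplicative on causal maps and takes only finitely many
   values over a finite alphabet.  Two distinct elements x, y differ on some word w,
   and trunc n separates them once n exceeds the lengths of w, x w and y w. *)

text \<open>The kernel of a multiplicative map is a congruence, and its index is bounded
  by the size of the image; hence separating homomorphisms give residual finiteness.\<close>
lemma residually_finite_if_separating_homs:
  assumes closed: "\<And>a b. a \<in> S \<Longrightarrow> b \<in> S \<Longrightarrow> mult a b \<in> S"
    and separating: "\<And>x y. x \<in> S \<Longrightarrow> y \<in> S \<Longrightarrow> x \<noteq> y \<Longrightarrow>
      \<exists>h :: 'b \<Rightarrow> 'c. (\<forall>a\<in>S. \<forall>b\<in>S. h (mult a b) = mult' (h a) (h b))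
             \<and> finite (h ` S) \<and> h x \<noteq> h y"
  shows "residually_finite S mult"
  unfolding residually_finite_def
proof (intro ballI impI)
  fix x y assume x: "x \<in> S" and y: "y \<in> S" and "x \<noteq> y"
  then obtain h :: "'b \<Rightarrow> 'c" where
    hom: "\<forall>a\<in>S. \<forall>b\<in>S. h (mult a b) = mult' (h a) (h b)"
    and fin: "finite (h ` S)" and sep: "h x \<noteq> h y"
    using separating by blast
  define R where "R = {(a, b). a \<in> S \<and> b \<in> S \<and> h a = h b}"
  have "equiv S R"
    unfolding R_def by (rule equivI) (auto simp: refl_on_def sym_def trans_def)
  moreover have "(mult a c, mult b c) \<in> R \<and> (mult c a, mult c b) \<in> R"
    if "(a, b) \<in> R" and "c \<in> S" for a b c
    using that hom closed unfolding R_def by auto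
  moreover have "finite (S // R)"
  proof -
    have "R `` {a} = {b \<in> S. h b = h a}" if "a \<in> S" for a
      using that unfolding R_def by auto
    then have "S // R \<subseteq> (\<lambda>t. {b \<in> S. h b = t}) ` (h ` S)"
      unfolding quotient_def by auto
    then show ?thesis using fin finite_subset by blast
  qed
  moreover have "(x, y) \<notin> R" using sep unfolding R_def by simp
  ultimately show "\<exists>R. equiv S R
      \<and> (\<forall>a b c. (a, b) \<in> R \<and> c \<in> S \<longrightarrow> (mult a c, mult b c) \<in> R \<and> (mult c a, mult c b) \<in> R)
      \<and> finite (S // R) \<and> (x, y) \<notin> R"
    by blast
qed

definition causal :: "('a list \<Rightarrow> 'b list) \<Rightarrow> bool" where
  "causal h \<longleftrightarrow> (\<forall>n u. take n (h u) = take n (h (take n u)))"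

lemma causal_comp:
  assumes f: "causal f" and g: "causal g"
  shows "causal (f \<circ> g)"
  unfolding causal_def
proof (intro allI)
  fix n u
  have "take n (f (g u)) = take n (f (take n (g u)))" using f unfolding causal_def by blast
  also have "take n (g u) = take n (g (take n u))" using g unfolding causal_def by blast
  also have "take n (f (take n (g (take n u)))) = take n (f (g (take n u)))"
    using f unfolding causal_def by metis
  finally show "take n ((f \<circ> g) u) = take n ((f \<circ> g) (take n u))" by simp
qed

lemma gen_semigroup_causal:
  assumes "\<And>g. g \<in> G \<Longrightarrow> causal g"
  shows "f \<in> gen_semigroup G \<Longrightarrow> causal f"
  by (induction rule: gen_semigroup.induct) (blast intro: assms causal_comp)+

lemma state_map_append_prefix:
  "\<exists>ts. state_map tr out q (u @ v) = state_map tr out q u @ ts"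
  by (induction u arbitrary: q) auto

lemma state_map_length_ge:
  assumes expanding: "\<And>q \<sigma>. out q \<sigma> \<noteq> []"
  shows "length u \<le> length (state_map tr out q u)"
proof (induction u arbitrary: q)
  case (Cons a u)
  have "out q a \<noteq> []" using expanding by blast
  then show ?case using Cons[of "tr q a"] by (cases "out q a") auto
qed simp

lemma state_map_causal:
  assumes expanding: "\<And>q \<sigma>. out q \<sigma> \<noteq> []"
  shows "causal (state_map tr out q)"
  unfolding causal_def
proof (intro allI)
  fix n u
  show "take n (state_map tr out q u) = take n (state_map tr out q (take n u))"
  proof (cases "length u \<le> n")
    case True then show ?thesis by simp
  next
    case False
    obtain ts where ts: "state_map tr out q (take n u @ drop n u) = state_map tr out q (take n u) @ ts"
      using state_map_append_prefix[of tr out q "take n u" "drop n u"] by blast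
    have "n \<le> length (state_map tr out q (take n u))"
      using state_map_length_ge[of out "take n u" tr q, OF expanding] False by simp
    then show ?thesis using ts by simp
  qed
qed

definition trunc :: "nat \<Rightarrow> ('a list \<Rightarrow> 'a list) \<Rightarrow> ('a list \<Rightarrow> 'a list)" where
  "trunc n f = (\<lambda>u. take n (f (take n u)))"

lemma trunc_comp:
  assumes "causal f"
  shows "trunc n (f \<circ> g) = trunc n f \<circ> trunc n g"
proof
  fix u
  have "take n (f (g (take n u))) = take n (f (take n (g (take n u))))"
    using assms unfolding causal_def by blast
  then show "trunc n (f \<circ> g) u = (trunc n f \<circ> trunc n g) u"
    unfolding trunc_def by simp
qed

text \<open>Over a finite alphabet there are only finitely many level-n truncations: each is
  determined by a map from words of length at most n to words of length at most n.\<close>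
lemma finite_range_trunc: "finite (range (trunc n :: ('a::finite list \<Rightarrow> 'a list) \<Rightarrow> _))"
proof -
  define L where "L = {xs :: 'a list. length xs \<le> n}"
  define extend where "extend r = (\<lambda>u. r (take n u))" for r :: "'a list \<Rightarrow> 'a list"
  have "finite L"
    using finite_lists_length_le[of "UNIV :: 'a set" n] unfolding L_def by simp
  then have "finite (extend ` (L \<rightarrow>\<^sub>E L))"
    by (simp add: finite_PiE)
  moreover have "trunc n f \<in> extend ` (L \<rightarrow>\<^sub>E L)" for f :: "'a list \<Rightarrow> 'a list"
  proof (rule image_eqI)
    show "trunc n f = extend (restrict (\<lambda>v. take n (f v)) L)"
      unfolding trunc_def extend_def L_def by auto
    show "restrict (\<lambda>v. take n (f v)) L \<in> L \<rightarrow>\<^sub>E L"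
      unfolding L_def by auto
  qed
  ultimately show ?thesis by (meson finite_subset image_subsetI)
qed

theorem mainTheorem8:
  fixes tr :: "'q::finite \<Rightarrow> 'a::finite \<Rightarrow> 'q"
    and out :: "'q \<Rightarrow> 'a \<Rightarrow> 'a list"
  assumes expanding: "\<And>q \<sigma>. out q \<sigma> \<noteq> []"
  shows "residually_finite (automaton_semigroup tr out) (\<circ>)"
proof (rule residually_finite_if_separating_homs)
  let ?S = "automaton_semigroup tr out"
  have causal: "causal f" if "f \<in> ?S" for f
    using that gen_semigroup_causal[of "range (state_map tr out)"]
      state_map_causal[of out tr, OF expanding]
    unfolding automaton_semigroup_def by blast
  show "f \<circ> g \<in> ?S" if "f \<in> ?S" "g \<in> ?S" for f g
    using that unfolding automaton_semigroup_def by (rule gen_semigroup.comp)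
  fix x y assume "x \<in> ?S" "y \<in> ?S" "x \<noteq> y"
  then obtain w where w: "x w \<noteq> y w" by blast
  define n where "n = max (length w) (max (length (x w)) (length (y w)))"
  have "trunc n x w \<noteq> trunc n y w" unfolding trunc_def n_def using w by simp
  then have "trunc n x \<noteq> trunc n y" by auto
  moreover have "finite (trunc n ` ?S)"
    using finite_subset[OF image_mono[OF subset_UNIV] finite_range_trunc] .
  moreover have "\<forall>a\<in>?S. \<forall>b\<in>?S. trunc n (a \<circ> b) = trunc n a \<circ> trunc n b"
    using causal trunc_comp by blast
  ultimately show "\<exists>h :: _ \<Rightarrow> 'a list \<Rightarrow> 'a list. (\<forall>a\<in>?S. \<forall>b\<in>?S. h (a \<circ> b) = h a \<circ> h b) \<and> finite (h ` ?S) \<and> h x \<noteq> h y"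
    by (intro exI[of _ "trunc n"]) blast
qed

end
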